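(* Let $n,m\in\mathbb{N}$ with $n\ge3$, $\sigma\in[5/n,1]$ and $\varepsilon\in[0,1/4]$. Let $A$ be a (possibly randomized) algorithm such that for every $n$-arm bandit $q$, $A$ makes $m$ (possibly adaptive) queries to the bandit oracle $\mathcal{O}_q$ and outputs a $\sigma$-smooth strategy $\pi$ that, with probability at least $2/3$, is an $\varepsilon$-optimal $\sigma$-smooth strategy for $q$. Then $m\ge n/6$.
   Context: An $n$-arm bandit is a vector $q=(q_1,\dots,q_n)$ of probability distributions on $[0,1]$; its oracle $\mathcal{O}_q$, on query $i\in[n]$, returns an independent sample from $q_i$. The expected utilities vector is $u$ with $u_i=\mathbb{E}_{x\sim q_i}[x]$. A strategy is a distribution $\pi$ on $[n]$ with expected utility $\pi\cdot u=\sum_i\pi_iu_i$; it is $\sigma$-smooth if $\pi_i\le\sigma$ for all $i$; it is an $\varepsilon$-optimal $\sigma$-smooth strategy for $q$ if it is $\sigma$-smooth and $\pi'\cdot u-\pi\cdot u\le\varepsilon$ for every $\sigma$-smooth strategy $\pi'$. *)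

theory Defs
  imports "HOL-Probability.Probability"
begin

text \<open>Arms are indexed by 0..n-1. A strategy is a probability vector on the arms
  (values at indices \<ge> n are irrelevant).\<close>

definition strategy :: "nat \<Rightarrow> (nat \<Rightarrow> real) \<Rightarrow> bool" where
  "strategy n \<pi> \<longleftrightarrow> (\<forall>i<n. 0 \<le> \<pi> i) \<and> (\<Sum>i<n. \<pi> i) = 1"

definition smooth_strategy :: "nat \<Rightarrow> real \<Rightarrow> (nat \<Rightarrow> real) \<Rightarrow> bool" where
  "smooth_strategy n \<sigma> \<pi> \<longleftrightarrow> strategy n \<pi> \<and> (\<forall>i<n. \<pi> i \<le> \<sigma>)"

definition bandit :: "nat \<Rightarrow> (nat \<Rightarrow> real measure) \<Rightarrow> bool" where
  "bandit n q \<longleftrightarrow> (\<forall>i<n. prob_space (q i) \<and> sets (q i) = sets borel \<and>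
                              (AE x in q i. x \<in> {0..1}))"

definition utility :: "(nat \<Rightarrow> real measure) \<Rightarrow> nat \<Rightarrow> real" where
  "utility q i = (\<integral>x. x \<partial>(q i))"

definition eps_optimal_smooth ::
  "nat \<Rightarrow> real \<Rightarrow> real \<Rightarrow> (nat \<Rightarrow> real measure) \<Rightarrow> (nat \<Rightarrow> real) \<Rightarrow> bool" where
  "eps_optimal_smooth n \<sigma> \<epsilon> q \<pi> \<longleftrightarrow> smooth_strategy n \<sigma> \<pi> \<and>
     (\<forall>\<pi>'. smooth_strategy n \<sigma> \<pi>' \<longrightarrow>
        (\<Sum>i<n. \<pi>' i * utility q i) - (\<Sum>i<n. \<pi> i * utility q i) \<le> \<epsilon>)"

text \<open>Randomized adaptive algorithm: a random seed \<omega> (from a probability space R);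
  at step k it queries arm Q k \<omega> h, where h is the list of answers received so far.
  The oracle is modelled by a table Y of independent samples, Y (k,i) ~ q i, and the
  answer to the k-th query (to arm i) is Y (k,i); since every step uses fresh samples,
  answers are independent samples of the queried arms.\<close>

fun answers :: "(nat \<Rightarrow> 'r \<Rightarrow> real list \<Rightarrow> nat) \<Rightarrow> 'r \<Rightarrow> (nat \<times> nat \<Rightarrow> real) \<Rightarrow> nat \<Rightarrow> real list" where
  "answers Q \<omega> Y 0 = []"
| "answers Q \<omega> Y (Suc k) = answers Q \<omega> Y k @ [Y (k, Q k \<omega> (answers Q \<omega> Y k))]"

definition outcome_space :: "'r measure \<Rightarrow> nat \<Rightarrow> nat \<Rightarrow> (nat \<Rightarrow> real measure)
    \<Rightarrow> ('r \<times> (nat \<times> nat \<Rightarrow> real)) measure" where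
  "outcome_space R n m q = R \<Otimes>\<^sub>M (PiM ({..<m} \<times> {..<n}) (\<lambda>(k,i). q i))"

end

theory Submission
  imports Defs
begin

text \<open>
  It suffices to consider the deterministic bandits whose arm \<open>i\<close> always pays \<open>1\<close> if \<open>i\<close> lies in a
  hidden \<open>k\<close>-set \<open>S\<close> and \<open>0\<close> otherwise. An \<open>\<epsilon>\<close>-optimal \<open>\<sigma>\<close>-smooth strategy for such a bandit puts
  mass at least \<open>min 1 (k\<sigma>) - \<epsilon>\<close> on \<open>S\<close>. Once the random seed is fixed the algorithm is
  deterministic, and summed over all \<open>k\<close>-sets \<open>S\<close> the mass its output puts on \<open>S\<close> is at most
  \<open>(n choose k) k (\<sigma> m + 1) / (n - m)\<close>: a query either hits an arm of \<open>S\<close>, which then carries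
  mass at most \<open>\<sigma>\<close>, or removes one arm from the symmetric pool of unexplored arms. Averaging
  over the seed against the success probability \<open>2/3\<close> gives
  \<open>(2/3) (n - m) (min 1 (k\<sigma>) - \<epsilon>) \<le> k (\<sigma> m + 1)\<close>, which fails for a suitable \<open>k\<close> when \<open>6 m < n\<close>.
\<close>

section \<open>Subsets of a finite set\<close>

lemma subsets_containing_eq_image_insert:
  assumes "finite U" "a \<in> U"
  shows "{S. S \<subseteq> U \<and> card S = Suc k \<and> a \<in> S} = insert a ` {T. T \<subseteq> U - {a} \<and> card T = k}"
proof (intro equalityI subsetI)
  fix S assume S: "S \<in> {S. S \<subseteq> U \<and> card S = Suc k \<and> a \<in> S}"
  then have "finite S" using assms(1) finite_subset by auto
  then have "S = insert a (S - {a})" "card (S - {a}) = k" using S by auto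
  then show "S \<in> insert a ` {T. T \<subseteq> U - {a} \<and> card T = k}" using S by blast
next
  fix S assume "S \<in> insert a ` {T. T \<subseteq> U - {a} \<and> card T = k}"
  then obtain T where "T \<subseteq> U - {a}" "card T = k" "S = insert a T" by blast
  moreover have "finite T" using calculation(1) assms(1) finite_subset by blast
  moreover have "a \<notin> T" using calculation(1) by blast
  ultimately show "S \<in> {S. S \<subseteq> U \<and> card S = Suc k \<and> a \<in> S}" using assms(2) by auto
qed

lemma inj_on_insert_subsets: "inj_on (insert a) {T. T \<subseteq> U - {a} \<and> card T = k}"
  by (rule inj_onI) (metis (no_types, lifting) Diff_insert_absorb mem_Collect_eq subset_Diff_insert)

lemma card_subsets_containing:
  assumes "finite U" "a \<in> U"
  shows "card {S. S \<subseteq> U \<and> card S = Suc k \<and> a \<in> S} = (card U - 1) choose k"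
  using assms by (simp add: subsets_containing_eq_image_insert card_image inj_on_insert_subsets n_subsets)

lemma sum_subsets_split_insert:
  assumes "finite U" "a \<in> U"
  shows "(\<Sum>S\<in>{S. S \<subseteq> U \<and> card S = Suc k}. g S) =
         (\<Sum>S\<in>{S. S \<subseteq> U - {a} \<and> card S = Suc k}. g S) +
         (\<Sum>T\<in>{T. T \<subseteq> U - {a} \<and> card T = k}. g (insert a T))"
proof -
  let ?avoiding = "{S. S \<subseteq> U - {a} \<and> card S = Suc k}"
  let ?containing = "{S. S \<subseteq> U \<and> card S = Suc k \<and> a \<in> S}"
  have "{S. S \<subseteq> U \<and> card S = Suc k} = ?avoiding \<union> ?containing"
    by auto
  moreover have "sum g (?avoiding \<union> ?containing) = sum g ?avoiding + sum g ?containing"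
    using assms(1) by (intro sum.union_disjoint) auto
  moreover have "sum g ?containing = (\<Sum>T\<in>{T. T \<subseteq> U - {a} \<and> card T = k}. g (insert a T))"
    using assms by (simp add: subsets_containing_eq_image_insert sum.reindex inj_on_insert_subsets)
  ultimately show ?thesis by simp
qed

lemma sum_subsets_sum_elements:
  fixes f :: "'a \<Rightarrow> 'b::comm_semiring_1"
  assumes "finite U"
  shows "(\<Sum>S\<in>{S. S \<subseteq> U \<and> card S = Suc k}. \<Sum>i\<in>S. f i) = of_nat ((card U - 1) choose k) * (\<Sum>i\<in>U. f i)"
proof -
  let ?F = "{S. S \<subseteq> U \<and> card S = Suc k}"
  have "(\<Sum>S\<in>?F. \<Sum>i\<in>S. f i) = (\<Sum>S\<in>?F. \<Sum>i\<in>{i \<in> U. i \<in> S}. f i)"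
    by (intro sum.cong) auto
  also have "\<dots> = (\<Sum>i\<in>U. \<Sum>S\<in>{S \<in> ?F. i \<in> S}. f i)"
    using assms by (intro sum.swap_restrict) auto
  also have "\<dots> = (\<Sum>i\<in>U. of_nat ((card U - 1) choose k) * f i)"
    using assms by (intro sum.cong refl) (simp add: card_subsets_containing conj_assoc)
  finally show ?thesis by (simp add: sum_distrib_left)
qed

section \<open>Adaptive queries against a hidden subset\<close>

fun run_queries :: "(real list \<Rightarrow> nat) \<Rightarrow> (nat \<Rightarrow> real) \<Rightarrow> nat \<Rightarrow> real list \<Rightarrow> real list" where
  "run_queries A v 0 h = h"
| "run_queries A v (Suc j) h = run_queries A v j (h @ [v (A h)])"

text \<open>
  The arms in \<open>U\<close> are unexplored and pay \<open>1\<close> exactly on the hidden subset \<open>S\<close>; an arm \<open>i\<close>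
  outside \<open>U\<close> pays its already revealed value \<open>w i\<close>. \<open>P h\<close> is the strategy output after history \<open>h\<close>.
\<close>

definition hidden_subset_mass ::
  "(real list \<Rightarrow> nat) \<Rightarrow> (real list \<Rightarrow> nat \<Rightarrow> real) \<Rightarrow> nat set \<Rightarrow> (nat \<Rightarrow> real) \<Rightarrow> nat \<Rightarrow> real list \<Rightarrow> nat \<Rightarrow> real"
where
  "hidden_subset_mass A P U w j h k =
     (\<Sum>S\<in>{S. S \<subseteq> U \<and> card S = k}. \<Sum>i\<in>S. P (run_queries A (override_on w (indicator S) U) j h) i)"

lemma hidden_subset_mass_empty:
  assumes "finite U"
  shows "hidden_subset_mass A P U w j h 0 = 0"
proof -
  have "{S. S \<subseteq> U \<and> card S = 0} = {{}}" using assms by (auto dest: finite_subset)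
  then show ?thesis by (simp add: hidden_subset_mass_def)
qed

lemma hidden_subset_mass_no_queries:
  assumes "finite U"
  shows "hidden_subset_mass A P U w 0 h (Suc k) = real ((card U - 1) choose k) * sum (P h) U"
  using sum_subsets_sum_elements[OF assms] by (simp add: hidden_subset_mass_def)

lemma hidden_subset_mass_query_outside:
  assumes "A h \<notin> U"
  shows "hidden_subset_mass A P U w (Suc j) h k = hidden_subset_mass A P U w j (h @ [w (A h)]) k"
  using assms by (simp add: hidden_subset_mass_def)

lemma hidden_subset_mass_query_inside:
  assumes "finite U" "A h \<in> U"
  defines "a \<equiv> A h"
  shows "hidden_subset_mass A P U w (Suc j) h (Suc k) =
           hidden_subset_mass A P (U - {a}) (w(a := 0)) j (h @ [0]) (Suc k)
         + hidden_subset_mass A P (U - {a}) (w(a := 1)) j (h @ [1]) k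
         + (\<Sum>T\<in>{T. T \<subseteq> U - {a} \<and> card T = k}.
              P (run_queries A (override_on (w(a := 1)) (indicator T) (U - {a})) j (h @ [1])) a)"
proof -
  have miss: "override_on w (indicator S) U = override_on (w(a := 0)) (indicator S) (U - {a})"
    if "S \<subseteq> U - {a}" for S :: "nat set"
    using that assms(2) by (auto simp: override_on_def indicator_def fun_eq_iff a_def)
  have hit: "override_on w (indicator (insert a T)) U = override_on (w(a := 1)) (indicator T) (U - {a})"
    if "T \<subseteq> U - {a}" for T :: "nat set"
    using that assms(2) by (auto simp: override_on_def indicator_def fun_eq_iff a_def)
  let ?g = "\<lambda>S. \<Sum>i\<in>S. P (run_queries A (override_on w (indicator S) U) (Suc j) h) i"
  have "hidden_subset_mass A P U w (Suc j) h (Suc k) =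
          (\<Sum>S\<in>{S. S \<subseteq> U - {a} \<and> card S = Suc k}. ?g S)
        + (\<Sum>T\<in>{T. T \<subseteq> U - {a} \<and> card T = k}. ?g (insert a T))"
    unfolding hidden_subset_mass_def a_def by (rule sum_subsets_split_insert[OF assms(1,2)])
  also have "(\<Sum>S\<in>{S. S \<subseteq> U - {a} \<and> card S = Suc k}. ?g S) =
               hidden_subset_mass A P (U - {a}) (w(a := 0)) j (h @ [0]) (Suc k)"
    unfolding hidden_subset_mass_def by (intro sum.cong refl) (simp add: miss a_def)
  also have "(\<Sum>T\<in>{T. T \<subseteq> U - {a} \<and> card T = k}. ?g (insert a T)) =
               hidden_subset_mass A P (U - {a}) (w(a := 1)) j (h @ [1]) k
             + (\<Sum>T\<in>{T. T \<subseteq> U - {a} \<and> card T = k}.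
                  P (run_queries A (override_on (w(a := 1)) (indicator T) (U - {a})) j (h @ [1])) a)"
  proof -
    have "finite T" "a \<notin> T" if "T \<subseteq> U - {a}" for T
      using that assms(1) finite_subset by auto
    then show ?thesis
      unfolding hidden_subset_mass_def sum.distrib[symmetric]
      by (intro sum.cong refl) (simp add: hit flip: a_def)
  qed
  finally show ?thesis by (simp only: add.assoc)
qed

lemma binomial_step_bound:
  fixes \<sigma> x d :: real
  assumes "0 \<le> \<sigma>" "0 \<le> x" "0 < d" "d \<le> real (Suc N)"
  shows "real (N choose Suc k) * real (Suc k) * x / d + real (N choose k) * real k * x / d
           + real (N choose k) * \<sigma>
         \<le> real (Suc N choose Suc k) * real (Suc k) * (x + \<sigma>) / d"
proof -
  have pascal: "real (Suc N choose Suc k) = real (N choose Suc k) + real (N choose k)"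
    by simp
  have absorb: "real (Suc k) * real (Suc N choose Suc k) = real (Suc N) * real (N choose k)"
    by (metis Suc_times_binomial of_nat_mult)
  have "real (Suc N choose Suc k) * real (Suc k) * (x + \<sigma>)
      = real (Suc N choose Suc k) * real (Suc k) * x + real (Suc k) * real (Suc N choose Suc k) * \<sigma>"
    by (simp add: algebra_simps)
  also have "\<dots> = (real (N choose Suc k) + real (N choose k)) * real (Suc k) * x
                   + real (Suc N) * real (N choose k) * \<sigma>"
    unfolding absorb by (simp only: pascal)
  finally have expand: "real (Suc N choose Suc k) * real (Suc k) * (x + \<sigma>)
      = real (N choose Suc k) * real (Suc k) * x + real (N choose k) * real k * x
        + real (N choose k) * x + real (Suc N) * real (N choose k) * \<sigma>"
    by (simp add: algebra_simps)
  have "real (N choose k) * \<sigma> * d \<le> real (N choose k) * \<sigma> * real (Suc N)"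
    using assms by (intro mult_left_mono) auto
  moreover have "0 \<le> real (N choose k) * x" using assms(2) by simp
  ultimately have key: "real (N choose Suc k) * real (Suc k) * x + real (N choose k) * real k * x
                          + real (N choose k) * \<sigma> * d
                        \<le> real (Suc N choose Suc k) * real (Suc k) * (x + \<sigma>)"
    unfolding expand by (simp add: algebra_simps)
  have "real (N choose Suc k) * real (Suc k) * x / d + real (N choose k) * real k * x / d
          + real (N choose k) * \<sigma>
        = (real (N choose Suc k) * real (Suc k) * x + real (N choose k) * real k * x
          + real (N choose k) * \<sigma> * d) / d"
    using assms(3) by (simp add: field_simps)
  also have "\<dots> \<le> real (Suc N choose Suc k) * real (Suc k) * (x + \<sigma>) / d"
    using key assms(3) by (simp add: divide_right_mono)
  finally show ?thesis .
qed

lemma hidden_subset_mass_no_queries_le: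
  assumes "finite U" "0 < card U" "sum (P h) U \<le> 1"
  shows "hidden_subset_mass A P U w 0 h k \<le> real (card U choose k) * real k / real (card U)"
proof (cases k)
  case 0
  then show ?thesis by (simp add: hidden_subset_mass_empty[OF assms(1)])
next
  case (Suc k')
  obtain N where N: "card U = Suc N" using assms(2) by (cases "card U") auto
  have "hidden_subset_mass A P U w 0 h k = real (N choose k') * sum (P h) U"
    using hidden_subset_mass_no_queries[OF assms(1)] by (simp add: Suc N)
  also have "\<dots> \<le> real (N choose k')"
    using assms(3) by (simp add: mult_left_le)
  also have "\<dots> = real (card U choose k) * real k / real (card U)"
  proof -
    have "real (Suc k') * real (Suc N choose Suc k') = real (Suc N) * real (N choose k')"
      by (metis Suc_times_binomial of_nat_mult)
    then show ?thesis unfolding Suc N by (simp add: field_simps)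
  qed
  finally show ?thesis .
qed

lemma hidden_subset_mass_query_inside_le:
  assumes "0 \<le> \<sigma>" "finite U" "card U = Suc N" "j < N" "A h \<in> U"
    and "\<forall>h. \<forall>i\<in>U. P h i \<le> \<sigma>"
    and IH: "\<And>w' h' l. hidden_subset_mass A P (U - {A h}) w' j h' l
                \<le> real (N choose l) * real l * (\<sigma> * real j + 1) / real (N - j)"
  shows "hidden_subset_mass A P U w (Suc j) h (Suc k)
           \<le> real (Suc N choose Suc k) * real (Suc k) * (\<sigma> * real (Suc j) + 1) / real (Suc N - Suc j)"
proof -
  have "(\<Sum>T\<in>{T. T \<subseteq> U - {A h} \<and> card T = k}.
          P (run_queries A (override_on (w(A h := 1)) (indicator T) (U - {A h})) j (h @ [1])) (A h))
        \<le> (\<Sum>T\<in>{T. T \<subseteq> U - {A h} \<and> card T = k}. \<sigma>)"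
    using assms(5,6) by (intro sum_mono) simp
  also have "\<dots> = real (N choose k) * \<sigma>"
    using assms(2,3,5) by (simp add: n_subsets)
  finally have hit_mass: "(\<Sum>T\<in>{T. T \<subseteq> U - {A h} \<and> card T = k}.
          P (run_queries A (override_on (w(A h := 1)) (indicator T) (U - {A h})) j (h @ [1])) (A h))
        \<le> real (N choose k) * \<sigma>" .
  have "hidden_subset_mass A P U w (Suc j) h (Suc k)
        \<le> real (N choose Suc k) * real (Suc k) * (\<sigma> * real j + 1) / real (N - j)
          + real (N choose k) * real k * (\<sigma> * real j + 1) / real (N - j)
          + real (N choose k) * \<sigma>"
    unfolding hidden_subset_mass_query_inside[where A=A and h=h, OF assms(2,5)]
    by (intro add_mono IH hit_mass)
  also have "\<dots> \<le> real (Suc N choose Suc k) * real (Suc k) * ((\<sigma> * real j + 1) + \<sigma>) / real (N - j)"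
    using assms(1,4) by (intro binomial_step_bound) auto
  finally show ?thesis by (simp add: algebra_simps)
qed

lemma hidden_subset_mass_le:
  assumes "0 \<le> \<sigma>" "finite U" "j < card U"
    and "\<forall>h. \<forall>i\<in>U. 0 \<le> P h i \<and> P h i \<le> \<sigma>" "\<forall>h. sum (P h) U \<le> 1"
  shows "hidden_subset_mass A P U w j h k
           \<le> real (card U choose k) * real k * (\<sigma> * real j + 1) / real (card U - j)"
  using assms(2-)
proof (induction j arbitrary: U w h k)
  case 0
  then show ?case using hidden_subset_mass_no_queries_le by simp
next
  case (Suc j)
  note fin = Suc.prems(1) and bounded = Suc.prems(3) and total = Suc.prems(4)
  consider "A h \<notin> U" | "A h \<in> U" "k = 0" | k' where "A h \<in> U" "k = Suc k'"
    by (cases k) auto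
  then show ?case
  proof cases
    case 1
    have "hidden_subset_mass A P U w (Suc j) h k = hidden_subset_mass A P U w j (h @ [w (A h)]) k"
      using 1 by (rule hidden_subset_mass_query_outside)
    also have "\<dots> \<le> real (card U choose k) * real k * (\<sigma> * real j + 1) / real (card U - j)"
      using Suc by simp
    also have "\<dots> \<le> real (card U choose k) * real k * (\<sigma> * real (Suc j) + 1) / real (card U - Suc j)"
      using Suc.prems(2) assms(1) by (intro frac_le mult_left_mono) (auto intro!: mult_left_mono)
    finally show ?thesis .
  next
    case 2
    then show ?thesis by (simp add: hidden_subset_mass_empty[OF fin])
  next
    case 3
    obtain N where N: "card U = Suc N" using Suc.prems(2) by (cases "card U") auto
    have "sum (P h') (U - {A h}) \<le> sum (P h') U" for h'
      using fin bounded by (intro sum_mono2) auto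
    then have total': "\<forall>h'. sum (P h') (U - {A h}) \<le> 1" using total by (meson order_trans)
    have "\<forall>h'. \<forall>i\<in>U - {A h}. 0 \<le> P h' i \<and> P h' i \<le> \<sigma>" using bounded by blast
    note IH = Suc.IH[OF _ _ this total']
    show ?thesis
      unfolding 3(2) N using assms(1) fin N Suc.prems(2) 3(1) bounded IH
      by (intro hidden_subset_mass_query_inside_le) auto
  qed
qed

lemma sum_subsets_output_mass_le:
  assumes "0 \<le> \<sigma>" "m < n" "\<forall>h. smooth_strategy n \<sigma> (P h)"
  shows "(\<Sum>S\<in>{S. S \<subseteq> {..<n} \<and> card S = k}. \<Sum>i\<in>S. P (run_queries A (indicator S) m []) i)
           \<le> real (n choose k) * real k * (\<sigma> * real m + 1) / real (n - m)"
proof -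
  have "override_on (\<lambda>_. 0) (indicator S) {..<n} = (indicator S :: nat \<Rightarrow> real)" if "S \<subseteq> {..<n}" for S
    using that by (auto simp: override_on_def indicator_def fun_eq_iff)
  then have "(\<Sum>S\<in>{S. S \<subseteq> {..<n} \<and> card S = k}. \<Sum>i\<in>S. P (run_queries A (indicator S) m []) i)
             = hidden_subset_mass A P {..<n} (\<lambda>_. 0) m [] k"
    unfolding hidden_subset_mass_def by (intro sum.cong) auto
  also have "\<dots> \<le> real (n choose k) * real k * (\<sigma> * real m + 1) / real (n - m)"
    using hidden_subset_mass_le[of \<sigma> "{..<n}" m P] assms
    by (simp add: smooth_strategy_def strategy_def)
  finally show ?thesis .
qed

section \<open>Indicator bandits\<close>

lemma pos_if_le_of_nat_mult:
  fixes \<sigma> c :: real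
  assumes "0 < c" "c \<le> real n * \<sigma>"
  shows "0 < \<sigma>"
  using assms by (auto simp: zero_less_mult_iff dest: order.strict_trans2)

definition indicator_bandit :: "nat set \<Rightarrow> nat \<Rightarrow> real measure" where
  "indicator_bandit S = (\<lambda>i. return borel (indicator S i))"

lemma bandit_indicator_bandit: "bandit n (indicator_bandit S)"
  unfolding bandit_def indicator_bandit_def by (simp add: prob_space_return AE_return)

lemma expected_utility_indicator_bandit:
  assumes "S \<subseteq> {..<n}"
  shows "(\<Sum>i<n. \<pi> i * utility (indicator_bandit S) i) = sum \<pi> S"
proof -
  have "utility (indicator_bandit S) i = indicator S i" for i
    unfolding utility_def indicator_bandit_def by (rule integral_return) auto
  then have "(\<Sum>i<n. \<pi> i * utility (indicator_bandit S) i) = (\<Sum>i\<in>{..<n} \<inter> S. \<pi> i)"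
    by (simp add: indicator_def sum.inter_restrict)
  also have "{..<n} \<inter> S = S" using assms by auto
  finally show ?thesis .
qed

lemma exists_smooth_strategy_mass:
  assumes "S \<subseteq> {..<n}" "card S = k" "0 < k" "k < n" "1 \<le> real n * \<sigma>"
  shows "\<exists>\<pi>. smooth_strategy n \<sigma> \<pi> \<and> sum \<pi> S = min 1 (real k * \<sigma>)"
proof -
  have \<sigma>_pos: "0 < \<sigma>" using pos_if_le_of_nat_mult[OF _ assms(5)] by simp
  define c where "c = min (1 / real k) \<sigma>"
  define d where "d = (1 - real k * c) / (real n - real k)"
  define \<pi> where "\<pi> i = (if i \<in> S then c else d)" for i
  have kc: "real k * c = min 1 (real k * \<sigma>)"
    unfolding c_def using assms(3) by (simp add: min_def field_simps)
  have c: "0 \<le> c" "c \<le> \<sigma>" unfolding c_def using \<sigma>_pos by auto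
  have d: "0 \<le> d" "d \<le> \<sigma>"
  proof -
    show "0 \<le> d" unfolding d_def kc using assms(4) by simp
    have "0 \<le> (real n - real k) * \<sigma>" using assms(4) \<sigma>_pos by simp
    then have "1 - real k * c \<le> (real n - real k) * \<sigma>"
      unfolding kc using assms(5) by (simp add: min_def algebra_simps)
    then show "d \<le> \<sigma>" unfolding d_def using assms(4) by (simp add: field_simps)
  qed
  have "finite S" using assms(1) finite_subset by blast
  then have mass: "sum \<pi> S = real k * c" using assms(2) by (simp add: \<pi>_def)
  have "(\<Sum>i<n. \<pi> i) = sum \<pi> S + sum \<pi> ({..<n} - S)"
    using assms(1) by (simp add: sum.subset_diff)
  also have "\<dots> = real k * c + real (n - k) * d"
    using assms(1,2) \<open>finite S\<close> by (simp add: mass \<pi>_def card_Diff_subset)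
  also have "\<dots> = 1" unfolding d_def using assms(4) by (simp add: field_simps)
  finally have "smooth_strategy n \<sigma> \<pi>"
    using c d by (auto simp: smooth_strategy_def strategy_def \<pi>_def)
  then show ?thesis using mass kc by metis
qed

lemma eps_optimal_indicator_bandit_mass:
  assumes "S \<subseteq> {..<n}" "card S = k" "0 < k" "k < n" "1 \<le> real n * \<sigma>"
    and "eps_optimal_smooth n \<sigma> \<epsilon> (indicator_bandit S) \<pi>"
  shows "min 1 (real k * \<sigma>) - \<epsilon> \<le> sum \<pi> S"
proof -
  obtain \<pi>' where "smooth_strategy n \<sigma> \<pi>'" "sum \<pi>' S = min 1 (real k * \<sigma>)"
    using exists_smooth_strategy_mass[OF assms(1-5)] by blast
  with assms(6) show ?thesis
    unfolding eps_optimal_smooth_def expected_utility_indicator_bandit[OF assms(1)] by force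
qed

lemma card_solved_indicator_bandits_le:
  assumes "\<forall>h. smooth_strategy n \<sigma> (P h)" "0 < k" "k < n" "m < n" "1 \<le> real n * \<sigma>"
    and "\<epsilon> \<le> min 1 (real k * \<sigma>)"
  shows "(min 1 (real k * \<sigma>) - \<epsilon>) *
           card {S. S \<subseteq> {..<n} \<and> card S = k \<and>
                    eps_optimal_smooth n \<sigma> \<epsilon> (indicator_bandit S) (P (run_queries A (indicator S) m []))}
         \<le> real (n choose k) * real k * (\<sigma> * real m + 1) / real (n - m)"
proof -
  let ?F = "{S. S \<subseteq> {..<n} \<and> card S = k}"
  let ?solved = "{S. S \<subseteq> {..<n} \<and> card S = k \<and>
                    eps_optimal_smooth n \<sigma> \<epsilon> (indicator_bandit S) (P (run_queries A (indicator S) m []))}"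
  let ?mass = "\<lambda>S. \<Sum>i\<in>S. P (run_queries A (indicator S) m []) i"
  have \<sigma>: "0 \<le> \<sigma>" using pos_if_le_of_nat_mult[OF _ assms(5)] by simp
  have "(min 1 (real k * \<sigma>) - \<epsilon>) * card ?solved = (\<Sum>S\<in>?solved. min 1 (real k * \<sigma>) - \<epsilon>)"
    by simp
  also have "\<dots> \<le> sum ?mass ?solved"
    using eps_optimal_indicator_bandit_mass assms(2,3,5) by (intro sum_mono) auto
  also have "\<dots> \<le> sum ?mass ?F"
  proof (rule sum_mono2)
    show "0 \<le> ?mass S" if "S \<in> ?F - ?solved" for S
      using that assms(1) by (intro sum_nonneg) (auto simp: smooth_strategy_def strategy_def)
  qed auto
  also have "\<dots> \<le> real (n choose k) * real k * (\<sigma> * real m + 1) / real (n - m)"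
    using sum_subsets_output_mass_le[OF \<sigma> assms(4,1)] .
  finally show ?thesis .
qed

section \<open>Randomized algorithms\<close>

lemma length_answers [simp]: "length (answers Q \<omega> Y k) = k"
  by (induction k) auto

lemma run_queries_answers:
  "run_queries (\<lambda>h. Q (length h) \<omega> h) v j (answers Q \<omega> (\<lambda>p. v (snd p)) k)
     = answers Q \<omega> (\<lambda>p. v (snd p)) (k + j)"
proof (induction j arbitrary: k)
  case (Suc j)
  then show ?case using Suc.IH[of "Suc k"] by simp
qed simp

lemma answers_eq_run_queries:
  "answers Q \<omega> (\<lambda>p. v (snd p)) m = run_queries (\<lambda>h. Q (length h) \<omega> h) v m []"
  using run_queries_answers[of Q \<omega> v m 0] by simp

lemma answers_cong:
  assumes "\<forall>k \<omega> h. Q k \<omega> h < n" "\<forall>k<j. \<forall>i<n. Y (k, i) = Y' (k, i)"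
  shows "answers Q \<omega> Y j = answers Q \<omega> Y' j"
  using assms(2) by (induction j) (simp_all add: assms(1))

lemma measure_pair_return:
  assumes "prob_space R" "y \<in> space N" "X \<in> sets (R \<Otimes>\<^sub>M return N y)"
  shows "{\<omega> \<in> space R. (\<omega>, y) \<in> X} \<in> sets R"
    and "measure (R \<Otimes>\<^sub>M return N y) X = measure R {\<omega> \<in> space R. (\<omega>, y) \<in> X}"
proof -
  interpret return: prob_space "return N y" by (rule prob_space_return[OF assms(2)])
  have "(\<lambda>\<omega>. (\<omega>, y)) \<in> measurable R (R \<Otimes>\<^sub>M return N y)"
    using assms(2) by (intro measurable_Pair measurable_ident_sets measurable_const) auto
  from measurable_sets[OF this assms(3)]
  show slice: "{\<omega> \<in> space R. (\<omega>, y) \<in> X} \<in> sets R"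
    by (simp add: vimage_def Int_def conj_commute)
  have "emeasure (R \<Otimes>\<^sub>M return N y) X = (\<integral>\<^sup>+\<omega>. emeasure (return N y) (Pair \<omega> -` X) \<partial>R)"
    by (rule return.emeasure_pair_measure_alt[OF assms(3)])
  also have "\<dots> = (\<integral>\<^sup>+\<omega>. indicator {\<omega> \<in> space R. (\<omega>, y) \<in> X} \<omega> \<partial>R)"
    using sets_Pair1[OF assms(3)] by (intro nn_integral_cong) (simp add: indicator_def)
  also have "\<dots> = emeasure R {\<omega> \<in> space R. (\<omega>, y) \<in> X}"
    using slice by simp
  finally show "measure (R \<Otimes>\<^sub>M return N y) X = measure R {\<omega> \<in> space R. (\<omega>, y) \<in> X}"
    by (simp add: measure_def)
qed

lemma outcome_space_deterministic:
  fixes n m :: nat and v :: "nat \<Rightarrow> real"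
  defines "I \<equiv> {..<m} \<times> {..<n}"
  shows "outcome_space R n m (\<lambda>i. return borel (v i))
           = R \<Otimes>\<^sub>M return (PiM I (\<lambda>_. borel)) (restrict (\<lambda>p. v (snd p)) I)"
proof -
  have "outcome_space R n m (\<lambda>i. return borel (v i))
          = R \<Otimes>\<^sub>M PiM I (\<lambda>p. return ((\<lambda>_. borel) p) ((\<lambda>p. v (snd p)) p))"
    unfolding outcome_space_def I_def by (simp add: split_beta')
  also have "PiM I (\<lambda>p. return ((\<lambda>_. borel) p) ((\<lambda>p. v (snd p)) p))
               = return (PiM I (\<lambda>_. borel)) (restrict (\<lambda>p. v (snd p)) I)"
    unfolding I_def by (rule PiM_return) auto
  finally show ?thesis .
qed

lemma success_probability_deterministic:
  assumes "prob_space R" "\<forall>k \<omega> h. Q k \<omega> h < n"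
    and "{z \<in> space (outcome_space R n m (\<lambda>i. return borel (v i))).
           E (fst z) (answers Q (fst z) (snd z) m)} \<in> sets (outcome_space R n m (\<lambda>i. return borel (v i)))"
      (is "?X \<in> _")
  shows "{\<omega> \<in> space R. E \<omega> (answers Q \<omega> (\<lambda>p. v (snd p)) m)} \<in> sets R"
    and "measure (outcome_space R n m (\<lambda>i. return borel (v i))) ?X
           = measure R {\<omega> \<in> space R. E \<omega> (answers Q \<omega> (\<lambda>p. v (snd p)) m)}"
proof -
  let ?I = "{..<m} \<times> {..<n}"
  let ?y = "restrict (\<lambda>p. v (snd p)) ?I"
  have y: "?y \<in> space (PiM ?I (\<lambda>_. borel))" by (simp add: space_PiM)
  have "answers Q \<omega> ?y m = answers Q \<omega> (\<lambda>p. v (snd p)) m" for \<omega>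
    using assms(2) by (intro answers_cong) auto
  then have slice_eq: "{\<omega> \<in> space R. (\<omega>, ?y) \<in> ?X} = {\<omega> \<in> space R. E \<omega> (answers Q \<omega> (\<lambda>p. v (snd p)) m)}"
    using y by (auto simp: outcome_space_deterministic space_pair_measure)
  have "?X \<in> sets (R \<Otimes>\<^sub>M return (PiM ?I (\<lambda>_. borel)) ?y)"
    using assms(3) by (simp only: outcome_space_deterministic)
  note slice = measure_pair_return[OF assms(1) y this]
  show "{\<omega> \<in> space R. E \<omega> (answers Q \<omega> (\<lambda>p. v (snd p)) m)} \<in> sets R"
    using slice(1) slice_eq by simp
  show "measure (outcome_space R n m (\<lambda>i. return borel (v i))) ?X
          = measure R {\<omega> \<in> space R. E \<omega> (answers Q \<omega> (\<lambda>p. v (snd p)) m)}"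
    using slice(2) slice_eq by (simp only: outcome_space_deterministic)
qed

lemma success_event_indicator_bandit:
  assumes "prob_space R" "\<forall>k \<omega> h. Q k \<omega> h < n" "0 < p"
    and "p \<le> measure (outcome_space R n m (indicator_bandit S))
                {z \<in> space (outcome_space R n m (indicator_bandit S)). E (fst z) (answers Q (fst z) (snd z) m)}"
  shows "{\<omega> \<in> space R. E \<omega> (answers Q \<omega> (\<lambda>p. indicator S (snd p)) m)} \<in> sets R"
    and "p \<le> measure R {\<omega> \<in> space R. E \<omega> (answers Q \<omega> (\<lambda>p. indicator S (snd p)) m)}"
proof -
  have "{z \<in> space (outcome_space R n m (indicator_bandit S)). E (fst z) (answers Q (fst z) (snd z) m)}
          \<in> sets (outcome_space R n m (indicator_bandit S))"
    using assms(3,4) measure_notin_sets by fastforce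
  note deterministic = success_probability_deterministic[OF assms(1,2) this[unfolded indicator_bandit_def]]
  show "{\<omega> \<in> space R. E \<omega> (answers Q \<omega> (\<lambda>p. indicator S (snd p)) m)} \<in> sets R"
    by (rule deterministic(1))
  show "p \<le> measure R {\<omega> \<in> space R. E \<omega> (answers Q \<omega> (\<lambda>p. indicator S (snd p)) m)}"
    using assms(4) deterministic(2) by (simp add: indicator_bandit_def)
qed

lemma sum_measure_le_card_bound:
  assumes "prob_space M" "finite F" "\<And>S. S \<in> F \<Longrightarrow> B S \<in> sets M"
    and "\<And>\<omega>. \<omega> \<in> space M \<Longrightarrow> real (card {S \<in> F. \<omega> \<in> B S}) \<le> c"
  shows "(\<Sum>S\<in>F. measure M (B S)) \<le> c"
proof -
  interpret prob_space M by fact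
  have int: "integrable M (indicator (B S) :: _ \<Rightarrow> real)" if "S \<in> F" for S
    using assms(3)[OF that] by (simp add: less_top[symmetric])
  have "(\<Sum>S\<in>F. measure M (B S)) = (\<Sum>S\<in>F. integral\<^sup>L M (indicator (B S)))"
    using assms(3) by simp
  also have "\<dots> = integral\<^sup>L M (\<lambda>\<omega>. \<Sum>S\<in>F. indicator (B S) \<omega>)"
    using int by (simp add: Bochner_Integration.integral_sum)
  also have "\<dots> \<le> c"
  proof (intro integral_le_const AE_I2)
    fix \<omega> assume "\<omega> \<in> space M"
    moreover have "(\<Sum>S\<in>F. indicator (B S) \<omega>) = real (card {S \<in> F. \<omega> \<in> B S})"
      using assms(2) by (simp add: indicator_def sum.If_cases Int_def)
    ultimately show "(\<Sum>S\<in>F. indicator (B S) \<omega> :: real) \<le> c" using assms(4) by simp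
  qed (use int in auto)
  finally show ?thesis .
qed

lemma sum_prob_solved_indicator_bandits_le:
  fixes n m k :: nat and \<sigma> \<epsilon> :: real and R :: "'r measure" and Q :: "nat \<Rightarrow> 'r \<Rightarrow> real list \<Rightarrow> nat"
    and Out :: "'r \<Rightarrow> real list \<Rightarrow> nat \<Rightarrow> real"
  defines "B S \<equiv> {\<omega> \<in> space R. eps_optimal_smooth n \<sigma> \<epsilon> (indicator_bandit S)
                                (Out \<omega> (answers Q \<omega> (\<lambda>p. indicator S (snd p)) m))}"
  assumes "prob_space R" "\<forall>\<omega> h. smooth_strategy n \<sigma> (Out \<omega> h)" "\<And>S. B S \<in> sets R"
    and "0 < k" "k < n" "m < n" "1 \<le> real n * \<sigma>" "\<epsilon> < min 1 (real k * \<sigma>)"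
  shows "(min 1 (real k * \<sigma>) - \<epsilon>) * (\<Sum>S\<in>{S. S \<subseteq> {..<n} \<and> card S = k}. measure R (B S))
           \<le> real (n choose k) * real k * (\<sigma> * real m + 1) / real (n - m)"
proof -
  define gap where "gap = min 1 (real k * \<sigma>) - \<epsilon>"
  define F where "F = {S. S \<subseteq> {..<n} \<and> card S = k}"
  define T where "T = real (n choose k) * real k * (\<sigma> * real m + 1) / real (n - m)"
  have gap: "0 < gap" using assms(9) unfolding gap_def by linarith
  have "real (card {S \<in> F. \<omega> \<in> B S}) \<le> T / gap" if "\<omega> \<in> space R" for \<omega>
  proof -
    have solved_eq: "{S \<in> F. \<omega> \<in> B S} = {S. S \<subseteq> {..<n} \<and> card S = k \<and>
            eps_optimal_smooth n \<sigma> \<epsilon> (indicator_bandit S)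
              (Out \<omega> (run_queries (\<lambda>h. Q (length h) \<omega> h) (indicator S) m []))}"
      using that by (auto simp: F_def B_def answers_eq_run_queries)
    have "\<forall>h. smooth_strategy n \<sigma> (Out \<omega> h)" using assms(3) by blast
    with assms(5-9) have "gap * card {S \<in> F. \<omega> \<in> B S} \<le> T"
      unfolding gap_def T_def solved_eq by (intro card_solved_indicator_bandits_le) auto
    then show ?thesis using gap by (simp add: field_simps)
  qed
  then have "(\<Sum>S\<in>F. measure R (B S)) \<le> T / gap"
    by (intro sum_measure_le_card_bound[OF assms(2)]) (auto simp: F_def assms(4))
  then have "gap * (\<Sum>S\<in>F. measure R (B S)) \<le> T"
    using gap by (simp add: le_divide_eq mult.commute)
  then show ?thesis unfolding F_def T_def gap_def .
qed

lemma query_lower_bound: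
  fixes R :: "'r measure" and Q :: "nat \<Rightarrow> 'r \<Rightarrow> real list \<Rightarrow> nat"
    and Out :: "'r \<Rightarrow> real list \<Rightarrow> nat \<Rightarrow> real"
  assumes "prob_space R" "\<forall>k \<omega> h. Q k \<omega> h < n" "\<forall>\<omega> h. smooth_strategy n \<sigma> (Out \<omega> h)"
    and success: "\<forall>q. bandit n q \<longrightarrow>
           measure (outcome_space R n m q)
             {z \<in> space (outcome_space R n m q).
                eps_optimal_smooth n \<sigma> \<epsilon> q (Out (fst z) (answers Q (fst z) (snd z) m))}
           \<ge> p"
    and "0 < p" "0 < k" "k < n" "m < n" "1 \<le> real n * \<sigma>"
  shows "p * (real n - real m) * (min 1 (real k * \<sigma>) - \<epsilon>) \<le> real k * (\<sigma> * real m + 1)"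
proof (cases "\<epsilon> < min 1 (real k * \<sigma>)")
  case False
  then have "p * (real n - real m) * (min 1 (real k * \<sigma>) - \<epsilon>) \<le> 0"
    using assms(5,8) by (intro mult_nonneg_nonpos) auto
  moreover have "0 \<le> \<sigma>" using pos_if_le_of_nat_mult[OF _ assms(9)] by simp
  then have "0 \<le> real k * (\<sigma> * real m + 1)" by simp
  ultimately show ?thesis by linarith
next
  case True
  define B where "B S = {\<omega> \<in> space R. eps_optimal_smooth n \<sigma> \<epsilon> (indicator_bandit S)
                          (Out \<omega> (answers Q \<omega> (\<lambda>p. indicator S (snd p)) m))}" for S
  have B: "B S \<in> sets R" "p \<le> measure R (B S)" for S
  proof -
    have "p \<le> measure (outcome_space R n m (indicator_bandit S))
                {z \<in> space (outcome_space R n m (indicator_bandit S)).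
                   eps_optimal_smooth n \<sigma> \<epsilon> (indicator_bandit S) (Out (fst z) (answers Q (fst z) (snd z) m))}"
      using success bandit_indicator_bandit by blast
    from success_event_indicator_bandit[OF assms(1,2,5) this]
    show "B S \<in> sets R" "p \<le> measure R (B S)" unfolding B_def by simp_all
  qed
  let ?total = "\<Sum>S\<in>{S. S \<subseteq> {..<n} \<and> card S = k}. measure R (B S)"
  have "real (n choose k) * p \<le> ?total"
    using sum_mono[of "{S. S \<subseteq> {..<n} \<and> card S = k}" "\<lambda>_. p" "\<lambda>S. measure R (B S)"] B(2)
    by (simp add: n_subsets)
  then have "real (n choose k) * p * (min 1 (real k * \<sigma>) - \<epsilon>) \<le> (min 1 (real k * \<sigma>) - \<epsilon>) * ?total"
    using True by (simp add: mult.commute mult_left_mono)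
  also have "\<dots> \<le> real (n choose k) * real k * (\<sigma> * real m + 1) / real (n - m)"
    using sum_prob_solved_indicator_bandits_le[OF assms(1,3) B(1)[unfolded B_def] assms(6-9) True]
    unfolding B_def .
  finally have "real (n choose k) * p * (min 1 (real k * \<sigma>) - \<epsilon>)
                \<le> real (n choose k) * real k * (\<sigma> * real m + 1) / real (n - m)" .
  then have "real (n choose k) * (p * (real n - real m) * (min 1 (real k * \<sigma>) - \<epsilon>))
             \<le> real (n choose k) * (real k * (\<sigma> * real m + 1))"
    using assms(8) by (simp add: field_simps of_nat_diff)
  then show ?thesis
    using assms(7) by (simp add: mult_le_cancel_left_pos)
qed

section \<open>Choosing the subset size\<close>

text \<open>For such \<open>k\<close> the bound of \<open>query_lower_bound\<close> with \<open>p = 2/3\<close> and \<open>\<epsilon> = 1/4\<close> fails.\<close>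

definition fooling_size :: "nat \<Rightarrow> nat \<Rightarrow> real \<Rightarrow> nat \<Rightarrow> bool" where
  "fooling_size n m \<sigma> k \<longleftrightarrow> 0 < k \<and> k < n \<and>
     3 * real k * (\<sigma> * real m + 1) < 2 * (real n - real m) * (min 1 (real k * \<sigma>) - 1/4)"

lemma fooling_size_antimono:
  assumes "fooling_size n m \<sigma> k" "m' \<le> m" "m < n" "0 \<le> \<sigma>"
  shows "fooling_size n m' \<sigma> k"
proof -
  let ?gap = "min 1 (real k * \<sigma>) - 1/4"
  have "0 \<le> 3 * real k * (\<sigma> * real m + 1)" using assms(4) by simp
  then have "0 < 2 * (real n - real m) * ?gap"
    using assms(1) unfolding fooling_size_def by linarith
  then have "0 < ?gap" using assms(3) by (simp add: zero_less_mult_iff)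
  then have "2 * (real n - real m) * ?gap \<le> 2 * (real n - real m') * ?gap"
    using assms(2) by (intro mult_right_mono) auto
  moreover have "3 * real k * (\<sigma> * real m' + 1) \<le> 3 * real k * (\<sigma> * real m + 1)"
    using assms(2,4) by (intro mult_left_mono add_right_mono) (auto intro: mult_left_mono)
  ultimately show ?thesis using assms(1) unfolding fooling_size_def by linarith
qed

text \<open>A finite check: for each \<open>n < 32\<close> one of \<open>k = 1, \<dots>, 5\<close> works, and every case is linear
  in \<open>\<sigma>\<close> once \<open>min\<close> is split.\<close>

lemma fooling_size_small:
  assumes "3 \<le> n" "n < 32" "5 / real n \<le> \<sigma>" "\<sigma> \<le> 1"
  shows "\<exists>k. fooling_size n ((n - 1) div 6) \<sigma> k"
proof -
  have "n \<in> {3..<32}" using assms(1,2) by simp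
  then have "\<exists>k\<in>{1, 2, 3, 4, 5}. fooling_size n ((n - 1) div 6) \<sigma> k"
    using assms(3,4) unfolding fooling_size_def
    by (simp add: atLeastLessThan_nat_numeral min_def split: if_splits) (elim disjE; simp; linarith)
  then show ?thesis by blast
qed

lemma fooling_size_saturated:
  assumes "0 < k" "k < n" "1 \<le> real k * \<sigma>" "2 * real k * (\<sigma> * real m + 1) + real m < real n"
  shows "fooling_size n m \<sigma> k"
  using assms by (simp add: fooling_size_def)

text \<open>The convex function \<open>\<sigma> \<mapsto> \<sigma> n / 6 + 1 / \<sigma>\<close> lies below its chord on \<open>[5/n, 1/2]\<close>.\<close>

lemma scaled_plus_inverse_le:
  fixes \<sigma> :: real
  assumes "5 \<le> real n * \<sigma>" "\<sigma> \<le> 1/2"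
  shows "\<sigma> * (real n / 6) + 1 / \<sigma> \<le> real n / 5 + 5 / 6"
proof -
  have \<sigma>: "0 < \<sigma>" using pos_if_le_of_nat_mult[OF _ assms(1)] by simp
  have "0 \<le> (real n * \<sigma> - 5) * (1/2 - \<sigma>)"
    using assms by (intro mult_nonneg_nonneg) auto
  then have chord: "real n * \<sigma> * \<sigma> \<le> real n * \<sigma> / 2 + 5 * \<sigma> - 5 / 2"
    by (simp add: algebra_simps)
  have "(\<sigma> * (real n / 6) + 1 / \<sigma>) * \<sigma> = real n * \<sigma> * \<sigma> / 6 + 1"
    using \<sigma> by (simp add: field_simps)
  also have "\<dots> \<le> (real n / 5 + 5 / 6) * \<sigma>"
    using chord assms(1) by (simp add: algebra_simps)
  finally show ?thesis using \<sigma> by simp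
qed

lemma fooling_size_large:
  assumes "32 \<le> n" "6 * m < n" "5 / real n \<le> \<sigma>" "\<sigma> \<le> 1"
  shows "\<exists>k. fooling_size n m \<sigma> k"
proof -
  have m: "6 * real m \<le> real n - 1" using assms(2) by linarith
  have n\<sigma>: "5 \<le> real n * \<sigma>" using assms(1,3) by (simp add: field_simps)
  then have \<sigma>: "0 < \<sigma>" using pos_if_le_of_nat_mult[of 5 n \<sigma>] by simp
  show ?thesis
  proof (cases "1/2 \<le> \<sigma>")
    case True
    have "\<sigma> * real m \<le> real m" using assms(4) \<sigma> by (intro mult_left_le_one_le) auto
    then have "fooling_size n m \<sigma> 2"
      using True assms(1) m by (intro fooling_size_saturated) auto
    then show ?thesis by blast
  next
    case False
    define k where "k = nat \<lceil>1 / \<sigma>\<rceil>"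
    have "real k = of_int \<lceil>1 / \<sigma>\<rceil>" unfolding k_def using \<sigma> by simp
    then have k: "1 / \<sigma> \<le> real k" "real k < 1 / \<sigma> + 1"
      by linarith+
    have k\<sigma>: "1 \<le> real k * \<sigma>" using k(1) \<sigma> by (simp add: field_simps)
    have "real k * (\<sigma> * real m + 1) < (1 / \<sigma> + 1) * (\<sigma> * real m + 1)"
      using k(2) \<sigma> by (intro mult_strict_right_mono) (auto intro: add_nonneg_pos)
    also have "\<dots> = real m + \<sigma> * real m + 1 / \<sigma> + 1"
      using \<sigma> by (simp add: field_simps)
    also have "\<dots> \<le> real m + real n / 5 + 11 / 6"
    proof -
      have "\<sigma> * real m \<le> \<sigma> * (real n / 6)"
        using m \<sigma> by (intro mult_left_mono) auto
      then show ?thesis using scaled_plus_inverse_le[OF n\<sigma>] False by linarith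
    qed
    finally have "2 * real k * (\<sigma> * real m + 1) + real m < real n"
      using m assms(1) by linarith
    moreover have "0 < k" "k < n"
    proof -
      have "0 < 1 / \<sigma>" "1 / \<sigma> \<le> real n / 5" using \<sigma> n\<sigma> by (simp_all add: field_simps)
      then have "0 < real k" "real k < real n" using k assms(1) by linarith+
      then show "0 < k" "k < n" by simp_all
    qed
    ultimately show ?thesis using k\<sigma> fooling_size_saturated by blast
  qed
qed

lemma fooling_size_exists:
  assumes "3 \<le> n" "6 * m < n" "5 / real n \<le> \<sigma>" "\<sigma> \<le> 1"
  shows "\<exists>k. fooling_size n m \<sigma> k"
proof (cases "n < 32")
  case True
  then obtain k where "fooling_size n ((n - 1) div 6) \<sigma> k"
    using fooling_size_small assms by blast
  moreover have "0 \<le> \<sigma>" using assms(3) by (smt (verit) divide_nonneg_nonneg of_nat_0_le_iff)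
  ultimately have "fooling_size n m \<sigma> k"
    using assms(2) by (elim fooling_size_antimono) auto
  then show ?thesis by blast
next
  case False
  then show ?thesis using fooling_size_large assms by simp
qed

theorem mainTheorem9:
  fixes n m :: nat and \<sigma> \<epsilon> :: real
    and R :: "'r measure"
    and Q :: "nat \<Rightarrow> 'r \<Rightarrow> real list \<Rightarrow> nat"
    and Out :: "'r \<Rightarrow> real list \<Rightarrow> nat \<Rightarrow> real"
  assumes "n \<ge> 3"
    and "5 / real n \<le> \<sigma>" and "\<sigma> \<le> 1"
    and "0 \<le> \<epsilon>" and "\<epsilon> \<le> 1/4"
    and "prob_space R"
    and "\<forall>k \<omega> h. Q k \<omega> h < n"
    and "\<forall>\<omega> h. smooth_strategy n \<sigma> (Out \<omega> h)"
    and "\<forall>q. bandit n q \<longrightarrow>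
           measure (outcome_space R n m q)
             {z \<in> space (outcome_space R n m q).
                eps_optimal_smooth n \<sigma> \<epsilon> q (Out (fst z) (answers Q (fst z) (snd z) m))}
           \<ge> 2/3"
  shows "real m \<ge> real n / 6"
proof (rule ccontr)
  assume "\<not> real m \<ge> real n / 6"
  then have "6 * m < n" by linarith
  then obtain k where k: "fooling_size n m \<sigma> k"
    using fooling_size_exists assms(1-3) by blast
  have "1 \<le> real n * \<sigma>" using assms(1,2) by (simp add: field_simps)
  then have "2/3 * (real n - real m) * (min 1 (real k * \<sigma>) - \<epsilon>) \<le> real k * (\<sigma> * real m + 1)"
    using query_lower_bound[OF assms(6-9)] k \<open>6 * m < n\<close> by (simp add: fooling_size_def)
  moreover have "2 * (real n - real m) * (min 1 (real k * \<sigma>) - 1/4)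
                 \<le> 2 * (real n - real m) * (min 1 (real k * \<sigma>) - \<epsilon>)"
    using assms(5) \<open>6 * m < n\<close> by (intro mult_left_mono) auto
  ultimately show False using k by (simp add: fooling_size_def)
qed

end
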